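(* Let $E\subset[1,2]$ and $d\ge2$. Suppose that $0\le\beta<1$ and $\sup_{0<\delta<1}\delta^\beta N(E,\delta)<\infty$. Let $p_0=1+\frac{\beta}{d-1}$ and $p_1=1+\frac{p_0}{d}$. Then $\mathfrak{M}_{E,p_0}$ is bounded from $L^{p_0}(\mathbb{R}^+)$ to $L^{p_0}(\mu_d)$, and $\mathfrak{M}_{E,p_1}$ is bounded from $L^{p_1}(\mathbb{R}^+)$ to $L^{p_1d}(\mu_d)$.
   Context: $N(E,\delta)$ is the minimal number of intervals of length $\delta$ covering $E$. $\mu_d$ is the measure on $\mathbb{R}^+$ with $d\mu_d=r^{d-1}dr$; $L^p(\mathbb{R}^+)$ is with respect to Lebesgue measure. For $1\le p\le\infty$ with conjugate exponent $p'$, and $g$ on $\mathbb{R}^+$, $$\mathfrak{M}_{E,p}g(r)=\chi_{(2/3,4)}(r)\sup_{t\in E,\ r/2<t<3r/2}\int_{|r-t|}^{r+t}s^{\frac{d-1}{p'}-1}|g(s)|\,ds.$$ *)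

theory Defs
  imports "HOL-Analysis.Analysis"
begin

definition covering_number :: "real set \<Rightarrow> real \<Rightarrow> nat" where
  "covering_number E \<delta> =
     (LEAST n. \<exists>a :: nat \<Rightarrow> real. E \<subseteq> (\<Union>i<n. {a i .. a i + \<delta>}))"

definition epow :: "ennreal \<Rightarrow> real \<Rightarrow> ennreal" where
  "epow x q = (if x = \<infinity> then \<infinity> else ennreal (enn2real x powr q))"

text \<open>The maximal operator M_{E,p}; the exponent (d-1)/p' - 1 with 1/p' = 1 - 1/p.\<close>
definition maxop :: "real set \<Rightarrow> nat \<Rightarrow> real \<Rightarrow> (real \<Rightarrow> real) \<Rightarrow> real \<Rightarrow> ennreal" where
  "maxop E d p g r =
     (if r \<in> {2/3<..<4} then
        (SUP t \<in> {t \<in> E. r/2 < t \<and> t < 3*r/2}.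
           \<integral>\<^sup>+ s \<in> {\<bar>r - t\<bar> .. r + t}.
              ennreal (s powr ((real d - 1) * (1 - 1/p) - 1) * \<bar>g s\<bar>) \<partial>lborel)
      else 0)"

definition Lp_norm_leb :: "real \<Rightarrow> (real \<Rightarrow> real) \<Rightarrow> ennreal" where
  "Lp_norm_leb p g = epow (\<integral>\<^sup>+ s \<in> {0<..}. ennreal (\<bar>g s\<bar> powr p) \<partial>lborel) (1/p)"

text \<open>Norm of a nonnegative extended function in L^q(mu_d), d mu_d = r^(d-1) dr.\<close>
definition Lq_norm_mu :: "nat \<Rightarrow> real \<Rightarrow> (real \<Rightarrow> ennreal) \<Rightarrow> ennreal" where
  "Lq_norm_mu d q F = epow (\<integral>\<^sup>+ r \<in> {0<..}. epow (F r) q * ennreal (r ^ (d - 1)) \<partial>lborel) (1/q)"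

definition bounded_Lp_Lq_mu :: "((real \<Rightarrow> real) \<Rightarrow> real \<Rightarrow> ennreal) \<Rightarrow> real \<Rightarrow> real \<Rightarrow> nat \<Rightarrow> bool" where
  "bounded_Lp_Lq_mu T p q d \<longleftrightarrow>
     (\<exists>C::real. \<forall>g \<in> borel_measurable lborel.
        Lq_norm_mu d q (T g) \<le> ennreal C * Lp_norm_leb p g)"

end

theory Submission
  imports Defs
begin

(*
  Let near E m be the set of r in (2/3,4) within distance 4 * 2^-m of E. The covering hypothesis
  gives |near E m| <= A * 2^(-m(1 - beta)), so these sets shrink to a null set, and for r in
  near E m - near E (m+1) every admissible t satisfies |r - t| >= 2^-m. There the maximal function
  is at most the integral of s^alpha |g s| over [2^-m, 6]. Splitting this range into dyadic shells
  and applying Hoelder's inequality on each shell bounds it by 2^(m eps) z_m, where eps = (1-beta)/q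
  and z is the convolution of the shell norms of g with the geometric sequence 2^(-eps k).
  The exponent relation q((d-1)(p-1) - 1) = (beta - 1) p, which holds for (p,q) = (p0,p0) and
  (p1, d p1), says exactly that 2^(m eps q) |near E m| stays bounded. Hence the L^q(mu_d) integral
  is at most a constant times the sum of z_m^q, which Young's convolution inequality and the
  inclusion of l^p in l^q bound by a constant times the q-th power of the L^p norm of g.
*)

section \<open>Discrete inequalities\<close>

lemma Youngs_inequality_conjugate:
  fixes p x c :: real
  assumes "1 \<le> p" "0 \<le> x" "0 < c"
  shows "x * c powr (p - 1) \<le> x powr p / p + (1 - 1/p) * c powr p"
proof (cases "x = 0")
  case False
  then have "(x powr p) powr (1/p) * (c powr p) powr (1 - 1/p) \<le> (1/p) * x powr p + (1 - 1/p) * c powr p"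
    using assms by (intro Youngs_inequality_0) (auto simp: field_simps)
  moreover have "(x powr p) powr (1/p) = x" "(c powr p) powr (1 - 1/p) = c powr (p - 1)"
    using assms by (simp_all add: powr_powr algebra_simps)
  ultimately show ?thesis by simp
qed (use assms in simp)

lemma weighted_power_mean_le:
  fixes w x :: "'a \<Rightarrow> real"
  assumes "finite I" "1 \<le> p" "\<And>i. i \<in> I \<Longrightarrow> 0 \<le> w i" "\<And>i. i \<in> I \<Longrightarrow> 0 \<le> x i"
  shows "(\<Sum>i\<in>I. w i * x i) powr p \<le> (\<Sum>i\<in>I. w i) powr (p - 1) * (\<Sum>i\<in>I. w i * x i powr p)"
proof -
  define Z W R where "Z = (\<Sum>i\<in>I. w i * x i)" and "W = (\<Sum>i\<in>I. w i)"
    and "R = (\<Sum>i\<in>I. w i * x i powr p)"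
  have "0 \<le> Z" "0 \<le> W" "0 \<le> R"
    unfolding Z_def W_def R_def using assms by (auto intro: sum_nonneg)
  show ?thesis
  proof (cases "Z = 0")
    case True
    then show ?thesis using \<open>0 \<le> W\<close> \<open>0 \<le> R\<close> by (simp flip: Z_def W_def R_def)
  next
    case False
    have "W \<noteq> 0"
    proof
      assume "W = 0"
      then have "\<forall>i\<in>I. w i = 0"
        using assms unfolding W_def by (subst (asm) sum_nonneg_eq_0_iff) auto
      then show False using False unfolding Z_def by simp
    qed
    then have "0 < W" "0 < Z" using \<open>0 \<le> W\<close> \<open>0 \<le> Z\<close> False by auto
    define c where "c = Z / W"
    have "0 < c" using \<open>0 < W\<close> \<open>0 < Z\<close> by (simp add: c_def)
    \<comment> \<open>Young's inequality at every term, with the mean c as the comparison point\<close>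
    have "Z * c powr (p - 1) = (\<Sum>i\<in>I. w i * (x i * c powr (p - 1)))"
      unfolding Z_def by (simp add: sum_distrib_right mult.assoc)
    also have "\<dots> \<le> (\<Sum>i\<in>I. w i * (x i powr p / p + (1 - 1/p) * c powr p))"
      using assms \<open>0 < c\<close> by (intro sum_mono mult_left_mono Youngs_inequality_conjugate) auto
    also have "\<dots> = (\<Sum>i\<in>I. (1/p) * (w i * x i powr p) + (1 - 1/p) * c powr p * w i)"
      by (simp add: algebra_simps)
    also have "\<dots> = (1/p) * R + (1 - 1/p) * c powr p * W"
      unfolding R_def W_def by (simp add: sum.distrib sum_distrib_left)
    finally have "Z * c powr (p - 1) \<le> (1/p) * R + (1 - 1/p) * c powr p * W" .
    moreover have "Z * c powr (p - 1) = W * c powr p"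
      using \<open>0 < c\<close> \<open>0 < W\<close> by (simp add: c_def powr_diff field_simps)
    ultimately have "W * c powr p \<le> R"
      using assms(2) by (simp add: algebra_simps divide_le_cancel)
    moreover have "Z powr p = W powr (p - 1) * (W * c powr p)"
      using \<open>0 < W\<close> \<open>0 < c\<close> by (simp add: c_def powr_mult powr_diff powr_divide field_simps)
    ultimately show ?thesis
      using \<open>0 < W\<close> by (simp add: mult_left_mono flip: Z_def W_def R_def)
  qed
qed

lemma sum_power_lessThan_le:
  fixes \<rho> :: real
  assumes "0 \<le> \<rho>" "\<rho> < 1"
  shows "(\<Sum>k<n. \<rho> ^ k) \<le> 1 / (1 - \<rho>)"
  using assms by (simp add: sum_gp_strict divide_right_mono)

lemma sum_powr_le_powr_bound:
  fixes z :: "nat \<Rightarrow> real"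
  assumes "0 < p" "p \<le> q" "\<And>m. 0 \<le> z m" "\<And>N. (\<Sum>m<N. z m powr p) \<le> M"
  shows "(\<Sum>m<N. z m powr q) \<le> M powr (q / p)"
proof -
  have single: "z m powr p \<le> M" for m
    using member_le_sum[of m "{..<Suc m}" "\<lambda>m. z m powr p"] assms(4)[of "Suc m"] by simp
  then have "0 \<le> M" by (meson order_trans powr_ge_zero)
  \<comment> \<open>each term is at most M, so raising it from the power p to q costs at most M^(q/p-1)\<close>
  have "z m powr q \<le> z m powr p * M powr (q / p - 1)" for m
  proof -
    have "z m powr q = (z m powr p) powr (1 + (q / p - 1))"
      using assms(1) by (simp add: powr_powr)
    also have "\<dots> = (z m powr p) * (z m powr p) powr (q / p - 1)"
      unfolding powr_add by simp
    also have "\<dots> \<le> (z m powr p) * M powr (q / p - 1)"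
      using assms single[of m] by (intro mult_left_mono powr_mono2) auto
    finally show ?thesis .
  qed
  then have "(\<Sum>m<N. z m powr q) \<le> (\<Sum>m<N. z m powr p) * M powr (q / p - 1)"
    unfolding sum_distrib_right by (rule sum_mono)
  also have "\<dots> \<le> M * M powr (q / p - 1)"
    using assms(4) by (intro mult_right_mono) auto
  also have "\<dots> = M powr (q / p)"
    using \<open>0 \<le> M\<close> powr_add[of M 1 "q / p - 1"] by (cases "M = 0") auto
  finally show ?thesis .
qed

lemma sum_power_diff_atMost_le:
  fixes \<rho> :: real
  assumes "0 \<le> \<rho>" "\<rho> < 1"
  shows "(\<Sum>j\<le>m. \<rho> ^ (m - j)) \<le> 1 / (1 - \<rho>)"
  using sum.nat_diff_reindex[of "\<lambda>k. \<rho> ^ k" "Suc m"] sum_power_lessThan_le[OF assms, of "Suc m"]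
  by (simp add: lessThan_Suc_atMost)

lemma sum_power_diff_lessThan_le:
  fixes \<rho> :: real
  assumes "0 \<le> \<rho>" "\<rho> < 1"
  shows "(\<Sum>m<N. if j \<le> m then \<rho> ^ (m - j) else 0) \<le> 1 / (1 - \<rho>)"
proof -
  have "{j..<N} = {m \<in> {..<N}. j \<le> m}" by auto
  then have "(\<Sum>m<N. if j \<le> m then \<rho> ^ (m - j) else 0) = (\<Sum>m\<in>{j..<N}. \<rho> ^ (m - j))"
    by (simp only: sum.inter_filter[OF finite_lessThan])
  also have "\<dots> = (\<Sum>k<N - j. \<rho> ^ k)"
    by (simp add: sum.atLeastLessThan_shift_0 atLeast0LessThan)
  also have "\<dots> \<le> 1 / (1 - \<rho>)" by (rule sum_power_lessThan_le[OF assms])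
  finally show ?thesis .
qed

lemma geometric_convolution_lp:
  fixes Y :: "nat \<Rightarrow> real"
  assumes \<rho>: "0 \<le> \<rho>" "\<rho> < 1" and p: "1 \<le> p"
    and Y: "\<And>j. 0 \<le> Y j" "\<And>n. (\<Sum>j<n. Y j powr p) \<le> S"
  shows "(\<Sum>m<N. (\<Sum>j\<le>m. \<rho> ^ (m - j) * Y j) powr p) \<le> (1 / (1 - \<rho>)) powr p * S"
proof -
  define L where "L = 1 / (1 - \<rho>)"
  have "0 < L" using \<rho> by (simp add: L_def)
  have row: "(\<Sum>j\<le>m. \<rho> ^ (m - j)) \<le> L" for m
    unfolding L_def by (rule sum_power_diff_atMost_le[OF \<rho>])
  have column: "(\<Sum>m<N. if j \<le> m then \<rho> ^ (m - j) else 0) \<le> L" for j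
    unfolding L_def by (rule sum_power_diff_lessThan_le[OF \<rho>])
  have "(\<Sum>j\<le>m. \<rho> ^ (m - j) * Y j) powr p \<le> L powr (p - 1) * (\<Sum>j\<le>m. \<rho> ^ (m - j) * Y j powr p)" for m
  proof -
    have "(\<Sum>j\<le>m. \<rho> ^ (m - j) * Y j) powr p
        \<le> (\<Sum>j\<le>m. \<rho> ^ (m - j)) powr (p - 1) * (\<Sum>j\<le>m. \<rho> ^ (m - j) * Y j powr p)"
      using \<rho> p Y by (intro weighted_power_mean_le) auto
    also have "\<dots> \<le> L powr (p - 1) * (\<Sum>j\<le>m. \<rho> ^ (m - j) * Y j powr p)"
      using \<rho> p row[of m] by (intro mult_right_mono powr_mono2 sum_nonneg) auto
    finally show ?thesis .
  qed
  then have "(\<Sum>m<N. (\<Sum>j\<le>m. \<rho> ^ (m - j) * Y j) powr p)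
      \<le> L powr (p - 1) * (\<Sum>m<N. \<Sum>j\<le>m. \<rho> ^ (m - j) * Y j powr p)"
    unfolding sum_distrib_left by (rule sum_mono)
  also have "(\<Sum>m<N. \<Sum>j\<le>m. \<rho> ^ (m - j) * Y j powr p)
      = (\<Sum>m<N. \<Sum>j<N. if j \<le> m then \<rho> ^ (m - j) * Y j powr p else 0)"
  proof (rule sum.cong)
    fix m assume "m \<in> {..<N}"
    then have "{..m} = {j \<in> {..<N}. j \<le> m}" by auto
    then show "(\<Sum>j\<le>m. \<rho> ^ (m - j) * Y j powr p) = (\<Sum>j<N. if j \<le> m then \<rho> ^ (m - j) * Y j powr p else 0)"
      by (simp only: sum.inter_filter[OF finite_lessThan])
  qed simp
  also have "\<dots> = (\<Sum>j<N. Y j powr p * (\<Sum>m<N. if j \<le> m then \<rho> ^ (m - j) else 0))"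
    by (subst sum.swap) (simp add: sum_distrib_left if_distrib mult.commute cong: if_cong)
  also have "\<dots> \<le> (\<Sum>j<N. Y j powr p * L)"
    using column by (intro sum_mono mult_left_mono) auto
  also have "\<dots> \<le> L * S"
    using Y(2)[of N] \<open>0 < L\<close> by (simp add: mult.commute flip: sum_distrib_left)
  finally have "(\<Sum>m<N. (\<Sum>j\<le>m. \<rho> ^ (m - j) * Y j) powr p) \<le> L powr (p - 1) * (L * S)"
    using \<open>0 < L\<close> by (simp add: mult_left_mono)
  also have "\<dots> = L powr p * S"
    using \<open>0 < L\<close> by (simp add: powr_diff)
  finally show ?thesis unfolding L_def .
qed

lemma geometric_convolution_lq:
  fixes Y :: "nat \<Rightarrow> real"
  assumes "0 \<le> \<rho>" "\<rho> < 1" "1 \<le> p" "p \<le> q"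
    and "\<And>j. 0 \<le> Y j" "\<And>n. (\<Sum>j<n. Y j powr p) \<le> S"
  shows "(\<Sum>m<N. (\<Sum>j\<le>m. \<rho> ^ (m - j) * Y j) powr q) \<le> (1 / (1 - \<rho>)) powr q * S powr (q / p)"
proof -
  have "0 \<le> S" using assms(6)[of 0] by simp
  have "(\<Sum>m<N. (\<Sum>j\<le>m. \<rho> ^ (m - j) * Y j) powr q) \<le> ((1 / (1 - \<rho>)) powr p * S) powr (q / p)"
    using assms by (intro sum_powr_le_powr_bound geometric_convolution_lp) (auto intro: sum_nonneg)
  also have "\<dots> = (1 / (1 - \<rho>)) powr q * S powr (q / p)"
    using assms \<open>0 \<le> S\<close> by (simp add: powr_mult powr_powr)
  finally show ?thesis .
qed

lemma power_powr_commute: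
  fixes x y :: real
  assumes "0 < x"
  shows "(x ^ m) powr y = (x powr y) ^ m"
proof -
  have "x ^ m = x powr real m" using assms by (simp add: powr_realpow)
  then show ?thesis using assms by (simp add: powr_powr powr_power mult.commute)
qed

lemma suminf_geometric_layers_le:
  fixes Y :: "nat \<Rightarrow> real" and \<mu> :: "nat \<Rightarrow> ennreal"
  assumes \<mu>: "\<And>m. \<mu> m \<le> ennreal (A * (\<rho> powr q)^m)" and "0 \<le> A" "0 \<le> c"
    and \<rho>: "0 < \<rho>" "\<rho> < 1" and pq: "1 \<le> p" "p \<le> q"
    and Y: "\<And>j. 0 \<le> Y j" "\<And>n. (\<Sum>j<n. Y j powr p) \<le> S"
  shows "(\<Sum>m. ennreal (c * ((\<Sum>j\<le>m. \<rho>^(m - j) * Y j) / \<rho>^m) powr q) * \<mu> m)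
           \<le> ennreal (A * c * ((1 / (1 - \<rho>)) powr q * S powr (q / p)))"
proof -
  define z where "z m = (\<Sum>j\<le>m. \<rho>^(m - j) * Y j)" for m
  have "0 \<le> z m" for m unfolding z_def using Y \<rho> by (intro sum_nonneg) simp
  \<comment> \<open>the layer measures decay exactly as fast as the factor \<rho>^-mq grows\<close>
  have "ennreal (c * (z m / \<rho>^m) powr q) * \<mu> m \<le> ennreal (A * c * z m powr q)" for m
  proof -
    have "ennreal (c * (z m / \<rho>^m) powr q) * \<mu> m
        \<le> ennreal (c * (z m / \<rho>^m) powr q) * ennreal (A * (\<rho> powr q)^m)"
      by (rule mult_left_mono[OF \<mu>]) simp
    also have "\<dots> = ennreal (c * (z m / \<rho>^m) powr q * (A * (\<rho> powr q)^m))"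
      using \<open>0 \<le> A\<close> \<open>0 \<le> c\<close> by (simp add: ennreal_mult)
    also have "c * (z m / \<rho>^m) powr q * (A * (\<rho> powr q)^m) = A * c * z m powr q"
      using \<rho> \<open>0 \<le> z m\<close> by (simp add: powr_divide power_powr_commute)
    finally show ?thesis .
  qed
  then have "(\<Sum>m. ennreal (c * (z m / \<rho>^m) powr q) * \<mu> m) \<le> (\<Sum>m. ennreal (A * c * z m powr q))"
    by (intro suminf_le) auto
  also have "\<dots> \<le> ennreal (A * c * ((1 / (1 - \<rho>)) powr q * S powr (q / p)))"
  proof (rule suminf_le_const)
    fix N
    have "(\<Sum>m<N. ennreal (A * c * z m powr q)) = ennreal (A * c * (\<Sum>m<N. z m powr q))"
      using \<open>0 \<le> A\<close> \<open>0 \<le> c\<close> by (simp add: sum_distrib_left)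
    also have "\<dots> \<le> ennreal (A * c * ((1 / (1 - \<rho>)) powr q * S powr (q / p)))"
      using geometric_convolution_lq[OF _ \<rho>(2) pq Y, of N] \<rho>(1) \<open>0 \<le> A\<close> \<open>0 \<le> c\<close>
      unfolding z_def by (intro ennreal_leI mult_left_mono) auto
    finally show "(\<Sum>m<N. ennreal (A * c * z m powr q)) \<le> ennreal (A * c * ((1 / (1 - \<rho>)) powr q * S powr (q / p)))" .
  qed simp
  finally show ?thesis unfolding z_def .
qed

section \<open>Integral inequalities\<close>

lemma nn_set_integral_le_affine:
  fixes f h :: "'a \<Rightarrow> real"
  assumes [measurable]: "h \<in> borel_measurable M" "D \<in> sets M"
    and "\<And>x. f x \<le> a * h x + b" "0 \<le> a" "0 \<le> b" "\<And>x. 0 \<le> h x"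
  shows "(\<integral>\<^sup>+x\<in>D. ennreal (f x) \<partial>M)
           \<le> ennreal a * (\<integral>\<^sup>+x\<in>D. ennreal (h x) \<partial>M) + ennreal b * emeasure M D"
proof -
  have "(\<integral>\<^sup>+x\<in>D. ennreal (f x) \<partial>M) \<le> (\<integral>\<^sup>+x\<in>D. (ennreal a * ennreal (h x) + ennreal b) \<partial>M)"
    using assms by (intro nn_integral_mono mult_right_mono) (simp_all flip: ennreal_mult ennreal_plus)
  also have "\<dots> = (\<integral>\<^sup>+x\<in>D. ennreal a * ennreal (h x) \<partial>M) + (\<integral>\<^sup>+x\<in>D. ennreal b \<partial>M)"
    by (rule nn_set_integral_add) auto
  also have "\<dots> = ennreal a * (\<integral>\<^sup>+x\<in>D. ennreal (h x) \<partial>M) + ennreal b * emeasure M D"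
  proof -
    have "(\<lambda>x. ennreal (h x) * indicator D x) \<in> borel_measurable M" by measurable
    from nn_integral_cmult[OF this, of "ennreal a"] show ?thesis
      by (simp add: mult.assoc nn_integral_cmult_indicator)
  qed
  finally show ?thesis .
qed

lemma nn_integral_Holder_finite_set:
  fixes f :: "'a \<Rightarrow> real"
  assumes f[measurable]: "f \<in> borel_measurable M" and f_nonneg: "\<And>x. 0 \<le> f x"
    and D[measurable]: "D \<in> sets M" and D_measure: "emeasure M D \<le> ennreal \<mu>" "0 < \<mu>"
    and p: "1 \<le> p"
    and B: "(\<integral>\<^sup>+x\<in>D. ennreal (f x powr p) \<partial>M) = ennreal B" "0 \<le> B"
  shows "(\<integral>\<^sup>+x\<in>D. ennreal (f x) \<partial>M) \<le> ennreal (\<mu> powr (1 - 1/p) * B powr (1/p))"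
proof (cases "B = 0")
  case True
  have "AE x in M. ennreal (f x powr p) * indicator D x = 0"
    using B True by (subst nn_integral_0_iff_AE[symmetric]) auto
  then have "AE x in M. ennreal (f x) * indicator D x = 0"
    by eventually_elim (use f_nonneg in \<open>auto split: split_indicator\<close>)
  then have "(\<integral>\<^sup>+x\<in>D. ennreal (f x) \<partial>M) = 0"
    by (subst nn_integral_0_iff_AE) auto
  then show ?thesis by simp
next
  case False
  then have "0 < B" using B(2) by simp
  define c where "c = (B / \<mu>) powr (1/p)"
  define k where "k = c powr (p - 1)"
  define a b where "a = 1 / (p * k)" and "b = (1 - 1/p) * c powr p / k"
  have "0 < c" "0 < k" using \<open>0 < B\<close> D_measure by (simp_all add: c_def k_def)
  have "0 \<le> a" "0 \<le> b" using p \<open>0 < k\<close> by (simp_all add: a_def b_def)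
  \<comment> \<open>Young's inequality with the comparison point c chosen to make it sharp for the constant function\<close>
  have pointwise: "f x \<le> a * f x powr p + b" for x
    using Youngs_inequality_conjugate[OF p f_nonneg \<open>0 < c\<close>, of x] \<open>0 < k\<close> p
    by (simp add: a_def b_def k_def field_simps)
  have "(\<lambda>x. f x powr p) \<in> borel_measurable M" by measurable
  from nn_set_integral_le_affine[OF this D pointwise \<open>0 \<le> a\<close> \<open>0 \<le> b\<close> powr_ge_zero]
  have "(\<integral>\<^sup>+x\<in>D. ennreal (f x) \<partial>M) \<le> ennreal a * ennreal B + ennreal b * emeasure M D"
    using B(1) by simp
  also have "\<dots> \<le> ennreal a * ennreal B + ennreal b * ennreal \<mu>"
    using D_measure by (intro add_left_mono mult_left_mono) auto
  also have "\<dots> = ennreal (a * B + b * \<mu>)"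
    using \<open>0 \<le> a\<close> \<open>0 \<le> b\<close> B D_measure by (simp add: ennreal_mult ennreal_plus)
  also have "a * B + b * \<mu> = \<mu> powr (1 - 1/p) * B powr (1/p)"
  proof -
    have "\<mu> powr (1/p) * \<mu> powr ((p - 1) / p) = \<mu>"
      using p D_measure(2) by (simp add: diff_divide_distrib flip: powr_add)
    then show ?thesis
      using \<open>0 < B\<close> D_measure p
      by (simp add: a_def b_def k_def c_def powr_powr powr_divide powr_diff field_simps)
  qed
  finally show ?thesis .
qed

lemma nn_set_integral_UN_le_sum:
  assumes [measurable]: "f \<in> borel_measurable M" "\<And>i. i \<in> I \<Longrightarrow> A i \<in> sets M" and "finite I"
  shows "(\<integral>\<^sup>+x\<in>(\<Union>i\<in>I. A i). f x \<partial>M) \<le> (\<Sum>i\<in>I. \<integral>\<^sup>+x\<in>A i. f x \<partial>M)"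
proof -
  have "(\<integral>\<^sup>+x\<in>(\<Union>i\<in>I. A i). f x \<partial>M) \<le> (\<integral>\<^sup>+x. (\<Sum>i\<in>I. f x * indicator (A i) x) \<partial>M)"
  proof (rule nn_integral_mono)
    fix x
    show "f x * indicator (\<Union>i\<in>I. A i) x \<le> (\<Sum>i\<in>I. f x * indicator (A i) x)"
    proof (cases "x \<in> (\<Union>i\<in>I. A i)")
      case True
      then obtain i where "i \<in> I" "x \<in> A i" by blast
      then have "f x * indicator (\<Union>i\<in>I. A i) x = f x * indicator (A i) x"
        by (auto simp: indicator_def)
      also have "\<dots> \<le> (\<Sum>i\<in>I. f x * indicator (A i) x)"
        by (rule member_le_sum) (use \<open>i \<in> I\<close> \<open>finite I\<close> in auto)
      finally show ?thesis .
    qed simp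
  qed
  also have "\<dots> = (\<Sum>i\<in>I. \<integral>\<^sup>+x\<in>A i. f x \<partial>M)"
    by (rule nn_integral_sum) auto
  finally show ?thesis .
qed

lemma nn_integral_le_layers:
  fixes F :: "'a \<Rightarrow> ennreal" and c :: "nat \<Rightarrow> ennreal"
  assumes W: "\<And>m. W m \<in> sets M" "(\<Inter>m. W m) \<in> null_sets M"
    and F: "\<And>x. x \<notin> W 0 \<Longrightarrow> F x = 0" "\<And>m x. x \<in> W m \<Longrightarrow> x \<notin> W (Suc m) \<Longrightarrow> F x \<le> c m"
  shows "(\<integral>\<^sup>+x. F x \<partial>M) \<le> (\<Sum>m. c m * emeasure M (W m))"
proof -
  have "F x \<le> (\<Sum>m. c m * indicator (W m) x)" if "x \<notin> (\<Inter>m. W m)" for x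
  proof (cases "x \<in> W 0")
    case True
    from that obtain n where "x \<notin> W n" by blast
    with True obtain m where "x \<in> W m" "x \<notin> W (Suc m)"
      using ex_least_nat_less[of "\<lambda>n. x \<notin> W n" n] by blast
    then have "F x \<le> c m * indicator (W m) x" using F(2) by simp
    also have "\<dots> \<le> (\<Sum>m. c m * indicator (W m) x)"
      by (metis ennreal_suminf_lessD not_le less_irrefl)
    finally show ?thesis .
  qed (simp add: F(1))
  then have "AE x in M. F x \<le> (\<Sum>m. c m * indicator (W m) x)"
    by (intro AE_I'[OF W(2)]) auto
  then have "(\<integral>\<^sup>+x. F x \<partial>M) \<le> (\<integral>\<^sup>+x. (\<Sum>m. c m * indicator (W m) x) \<partial>M)"
    by (rule nn_integral_mono_AE)
  also have "\<dots> = (\<Sum>m. c m * emeasure M (W m))"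
    using W(1) by (simp add: nn_integral_suminf nn_integral_cmult_indicator)
  finally show ?thesis .
qed

lemma epow_le_ennreal:
  assumes "x \<le> ennreal y" "0 \<le> y" "0 \<le> q"
  shows "epow x q \<le> ennreal (y powr q)"
proof -
  obtain x' where "x = ennreal x'" "0 \<le> x'"
    using assms(1) by (cases x rule: ennreal_cases) (auto simp: top_unique)
  with assms show ?thesis by (simp add: epow_def ennreal_leI powr_mono2)
qed

section \<open>Covering numbers and neighbourhoods of E\<close>

lemma covering_number_cover:
  fixes E :: "real set"
  assumes "0 < \<delta>" "E \<subseteq> {1..2}"
  obtains a :: "nat \<Rightarrow> real" where "E \<subseteq> (\<Union>i<covering_number E \<delta>. {a i .. a i + \<delta>})"
proof -
  have "E \<subseteq> (\<Union>i<nat \<lceil>1/\<delta>\<rceil> + 1. {1 + real i * \<delta> .. 1 + real i * \<delta> + \<delta>})"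
  proof
    fix x assume "x \<in> E"
    then have x: "1 \<le> x" "x \<le> 2" using assms by auto
    define i where "i = nat \<lfloor>(x - 1) / \<delta>\<rfloor>"
    have i: "real i \<le> (x - 1) / \<delta>" "(x - 1) / \<delta> < real i + 1"
      using x assms by (simp_all add: i_def)
    then have "1 + real i * \<delta> \<le> x" "x \<le> 1 + real i * \<delta> + \<delta>"
      using assms by (simp_all add: pos_le_divide_eq pos_divide_less_eq algebra_simps)
    moreover have "(x - 1) / \<delta> \<le> 1 / \<delta>" using x assms by (simp add: divide_right_mono)
    then have "real i \<le> 1 / \<delta>" using i(1) by linarith
    then have "i < nat \<lceil>1/\<delta>\<rceil> + 1"
      using le_nat_iff[of "\<lceil>1/\<delta>\<rceil>" i] by (simp add: le_ceiling_iff)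
    ultimately show "x \<in> (\<Union>i<nat \<lceil>1/\<delta>\<rceil> + 1. {1 + real i * \<delta> .. 1 + real i * \<delta> + \<delta>})"
      by auto
  qed
  then have "\<exists>(n::nat) (a::nat \<Rightarrow> real). E \<subseteq> (\<Union>i<n. {a i .. a i + \<delta>})"
    by (intro exI[of _ "nat \<lceil>1/\<delta>\<rceil> + 1"] exI[of _ "\<lambda>i. 1 + real i * \<delta>"])
  then have "\<exists>a::nat \<Rightarrow> real. E \<subseteq> (\<Union>i<covering_number E \<delta>. {a i .. a i + \<delta>})"
    unfolding covering_number_def by (rule LeastI_ex)
  with that show ?thesis by blast
qed

lemma emeasure_thickening_le:
  fixes E :: "real set"
  assumes "0 < \<delta>" "E \<subseteq> {1..2}"
  shows "emeasure lborel (\<Union>t\<in>E. ball t \<delta>) \<le> ennreal (3 * \<delta> * real (covering_number E \<delta>))"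
proof -
  define N where "N = covering_number E \<delta>"
  obtain a where a: "E \<subseteq> (\<Union>i<N. {a i .. a i + \<delta>})"
    using covering_number_cover[OF assms] unfolding N_def by blast
  have "(\<Union>t\<in>E. ball t \<delta>) \<subseteq> (\<Union>i<N. {a i - \<delta> <..< a i + 2 * \<delta>})"
  proof
    fix r assume "r \<in> (\<Union>t\<in>E. ball t \<delta>)"
    then obtain t i where "i < N" "t \<in> {a i .. a i + \<delta>}" "\<bar>r - t\<bar> < \<delta>"
      using a by (auto simp: dist_real_def)
    then have "r \<in> {a i - \<delta> <..< a i + 2 * \<delta>}" by (auto simp: abs_less_iff)
    with \<open>i < N\<close> show "r \<in> (\<Union>i<N. {a i - \<delta> <..< a i + 2 * \<delta>})" by blast
  qed
  then have "emeasure lborel (\<Union>t\<in>E. ball t \<delta>) \<le> emeasure lborel (\<Union>i<N. {a i - \<delta> <..< a i + 2 * \<delta>})"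
    by (rule emeasure_mono) auto
  also have "\<dots> \<le> (\<Sum>i<N. emeasure lborel {a i - \<delta> <..< a i + 2 * \<delta>})"
    by (rule emeasure_subadditive_finite) auto
  also have "\<dots> = ennreal (3 * \<delta> * real N)"
    using assms by (simp add: ennreal_of_nat_eq_real_of_nat ennreal_mult'' mult.commute)
  finally show ?thesis unfolding N_def .
qed

lemma covering_bound_nonneg:
  assumes "\<And>\<delta>. 0 < \<delta> \<Longrightarrow> \<delta> < 1 \<Longrightarrow> \<delta> powr \<beta> * real (covering_number E \<delta>) \<le> C"
  shows "0 \<le> C"
proof -
  have "0 \<le> (1/2::real) powr \<beta> * real (covering_number E (1/2))" by simp
  also have "\<dots> \<le> C" by (rule assms) auto
  finally show ?thesis .
qed

lemma emeasure_thickening_le_powr: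
  fixes E :: "real set"
  assumes E: "E \<subseteq> {1..2}" and \<delta>: "0 < \<delta>" "\<delta> < 1"
    and cov: "\<And>\<delta>. 0 < \<delta> \<Longrightarrow> \<delta> < 1 \<Longrightarrow> \<delta> powr \<beta> * real (covering_number E \<delta>) \<le> C"
  shows "emeasure lborel (\<Union>t\<in>E. ball t \<delta>) \<le> ennreal (3 * C * \<delta> powr (1 - \<beta>))"
proof -
  have "emeasure lborel (\<Union>t\<in>E. ball t \<delta>) \<le> ennreal (3 * \<delta> * real (covering_number E \<delta>))"
    by (rule emeasure_thickening_le[OF \<delta>(1) E])
  also have "3 * \<delta> * real (covering_number E \<delta>)
      = 3 * \<delta> powr (1 - \<beta>) * (\<delta> powr \<beta> * real (covering_number E \<delta>))"
    using \<delta>(1) by (simp add: mult_ac flip: powr_add)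
  also have "\<dots> \<le> 3 * \<delta> powr (1 - \<beta>) * C"
    using cov[OF \<delta>] by (intro mult_left_mono) auto
  finally show ?thesis by (simp add: ennreal_leI mult_ac)
qed

definition near :: "real set \<Rightarrow> nat \<Rightarrow> real set" where
  "near E m = {2/3<..<4} \<inter> (\<Union>t\<in>E. ball t (4 * (1/2)^m))"

lemma near_sets [measurable]: "near E m \<in> sets lborel"
proof -
  have "open (near E m)" unfolding near_def by (intro open_Int open_UN ballI open_ball) auto
  then show ?thesis by (simp add: borel_open)
qed

lemma emeasure_near_le:
  fixes E :: "real set"
  assumes E: "E \<subseteq> {1..2}" and "0 \<le> \<beta>"
    and cov: "\<And>\<delta>. 0 < \<delta> \<Longrightarrow> \<delta> < 1 \<Longrightarrow> \<delta> powr \<beta> * real (covering_number E \<delta>) \<le> C"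
  shows "emeasure lborel (near E m) \<le> ennreal ((12 * C + 14) * ((1/2) powr (1 - \<beta>))^m)"
proof -
  define \<theta> \<delta> where "\<theta> = (1/2::real) powr (1 - \<beta>)" and "\<delta> = 4 * (1/2::real)^m"
  have "0 \<le> C" by (rule covering_bound_nonneg[OF cov])
  have "1/2 \<le> \<theta>"
    using \<open>0 \<le> \<beta>\<close> powr_mono'[of "1 - \<beta>" 1 "1/2::real"] by (simp add: \<theta>_def)
  then have "(1/2)^m \<le> \<theta>^m" by (intro power_mono) auto
  show ?thesis
  proof (cases "\<delta> < 1")
    case True
    have "0 < \<delta>" by (simp add: \<delta>_def)
    have "near E m \<subseteq> (\<Union>t\<in>E. ball t \<delta>)" unfolding near_def \<delta>_def by auto
    then have "emeasure lborel (near E m) \<le> emeasure lborel (\<Union>t\<in>E. ball t \<delta>)"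
      by (rule emeasure_mono) (simp add: borel_open open_UN)
    also have "\<dots> \<le> ennreal (3 * C * \<delta> powr (1 - \<beta>))"
      by (rule emeasure_thickening_le_powr[OF E \<open>0 < \<delta>\<close> True cov])
    also have "\<delta> powr (1 - \<beta>) = 4 powr (1 - \<beta>) * \<theta>^m"
      unfolding \<delta>_def \<theta>_def by (simp add: powr_mult power_powr_commute)
    also have "3 * C * (4 powr (1 - \<beta>) * \<theta>^m) \<le> 3 * C * (4 * \<theta>^m)"
      using \<open>0 \<le> \<beta>\<close> powr_mono[of "1 - \<beta>" 1 4] \<open>0 \<le> C\<close> \<open>1/2 \<le> \<theta>\<close>
      by (intro mult_left_mono mult_right_mono) auto
    also have "\<dots> \<le> (12 * C + 14) * \<theta>^m"
      using \<open>1/2 \<le> \<theta>\<close> by (simp add: algebra_simps)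
    finally show ?thesis unfolding \<theta>_def by (simp add: ennreal_leI)
  next
    case False
    have "emeasure lborel (near E m) \<le> emeasure lborel {2/3<..<4::real}"
      by (rule emeasure_mono) (auto simp: near_def)
    also have "\<dots> = ennreal (10/3)" by simp
    also have "\<dots> \<le> ennreal ((12 * C + 14) * \<theta>^m)"
    proof (intro ennreal_leI)
      have "1/4 \<le> \<theta>^m" using False \<open>(1/2)^m \<le> \<theta>^m\<close> by (simp add: \<delta>_def)
      moreover have "0 \<le> C * \<theta>^m" using \<open>0 \<le> C\<close> \<open>1/2 \<le> \<theta>\<close> by simp
      ultimately show "10/3 \<le> (12 * C + 14) * \<theta>^m" by (simp add: algebra_simps)
    qed
    finally show ?thesis unfolding \<theta>_def .
  qed
qed

lemma near_Inter_null:
  fixes E :: "real set"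
  assumes E: "E \<subseteq> {1..2}" and \<beta>: "0 \<le> \<beta>" "\<beta> < 1"
    and cov: "\<And>\<delta>. 0 < \<delta> \<Longrightarrow> \<delta> < 1 \<Longrightarrow> \<delta> powr \<beta> * real (covering_number E \<delta>) \<le> C"
  shows "(\<Inter>m. near E m) \<in> null_sets lborel"
proof -
  define A \<theta> where "A = 12 * C + 14" and "\<theta> = (1/2::real) powr (1 - \<beta>)"
  have "0 < A" using covering_bound_nonneg[OF cov] by (simp add: A_def)
  have "\<theta> < 1" unfolding \<theta>_def using \<beta> powr_less_mono'[of "1/2::real" 0 "1 - \<beta>"] by simp
  have small: "emeasure lborel (\<Inter>m. near E m) \<le> ennreal e" if "0 < e" for e
  proof -
    obtain m where m: "\<theta>^m < e / A"
      using real_arch_pow_inv[of "e / A" \<theta>] \<open>\<theta> < 1\<close> \<open>0 < e\<close> \<open>0 < A\<close> by auto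
    have "emeasure lborel (\<Inter>m. near E m) \<le> emeasure lborel (near E m)"
      by (intro emeasure_mono near_sets) auto
    also have "\<dots> \<le> ennreal (A * \<theta>^m)"
      unfolding A_def \<theta>_def by (rule emeasure_near_le[OF E \<beta>(1) cov])
    also have "\<dots> \<le> ennreal e"
      using m \<open>0 < A\<close> by (intro ennreal_leI) (simp add: field_simps)
    finally show ?thesis .
  qed
  have "emeasure lborel (\<Inter>m. near E m) \<le> 0"
    by (rule ennreal_le_epsilon) (simp add: small)
  moreover have "(\<Inter>m. near E m) \<in> sets lborel" by measurable
  ultimately show ?thesis by (simp add: null_sets_def)
qed

section \<open>Dyadic shells\<close>

text \<open>The first shell reaches up to 6 because the integrals defining \<^const>\<open>maxop\<close> extend to r + t < 6.\<close>

definition shell :: "nat \<Rightarrow> real set" where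
  "shell j = (if j = 0 then {1..6} else {(1/2)^j ..< 2 * (1/2)^j})"

lemma shell_sets [measurable]: "shell j \<in> sets lborel"
  by (simp add: shell_def)

lemma emeasure_shell_le: "emeasure lborel (shell j) \<le> ennreal (5 * (1/2)^j)"
  by (auto simp: shell_def intro: ennreal_leI)

lemma shell_ge: "s \<in> shell j \<Longrightarrow> (1/2)^j \<le> s"
  by (auto simp: shell_def split: if_splits)

lemma shell_less: "0 < j \<Longrightarrow> s \<in> shell j \<Longrightarrow> s < 2 * (1/2)^j"
  by (simp add: shell_def)

lemma disjoint_family_shell: "disjoint_family shell"
proof -
  have "shell j \<inter> shell k = {}" if "j < k" for j k
  proof -
    have "2 * (1/2::real)^k \<le> (1/2)^j"
      using power_decreasing[of "Suc j" k "1/2::real"] that by simp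
    then show ?thesis
      using shell_ge[of _ j] shell_less[of k] that by fastforce
  qed
  then show ?thesis
    unfolding disjoint_family_on_def by (metis Int_commute linorder_neqE_nat)
qed

lemma UN_shell_subset: "(\<Union>j. shell j) \<subseteq> {0<..}"
proof
  fix s assume "s \<in> (\<Union>j. shell j)"
  then obtain j where "(1/2)^j \<le> s" using shell_ge by blast
  moreover have "(0::real) < (1/2)^j" by simp
  ultimately show "s \<in> {0<..}" by (simp only: greaterThan_iff)
qed

lemma atLeastAtMost_subset_UN_shell: "{(1/2)^m..6} \<subseteq> (\<Union>j\<le>m. shell j)"
proof (induction m)
  case 0
  then show ?case by (auto simp: shell_def)
next
  case (Suc m)
  have "{(1/2)^Suc m..6} \<subseteq> {(1/2)^m..6} \<union> shell (Suc m)"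
    by (auto simp: shell_def)
  also have "\<dots> \<subseteq> (\<Union>j\<le>Suc m. shell j)"
    using Suc.IH by (auto simp: atMost_Suc)
  finally show ?case .
qed

lemma shell_Holder:
  fixes f :: "real \<Rightarrow> real"
  assumes f[measurable]: "f \<in> borel_measurable lborel" and f_nonneg: "\<And>s. 0 \<le> f s"
    and p: "1 \<le> p" and \<alpha>: "\<alpha> \<le> 0" "\<alpha> + 1 - 1/p = -\<epsilon>"
    and b: "(\<integral>\<^sup>+s\<in>shell j. ennreal (f s powr p) \<partial>lborel) = ennreal b" "0 \<le> b"
  shows "(\<integral>\<^sup>+s\<in>shell j. ennreal (s powr \<alpha> * f s) \<partial>lborel)
           \<le> ennreal (5 powr (1 - 1/p) * b powr (1/p) / ((1/2) powr \<epsilon>)^j)"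
proof -
  define h where "h = ((1/2::real)^j) powr \<alpha>"
  have "0 \<le> h" by (simp add: h_def)
  have "ennreal (s powr \<alpha> * f s) * indicator (shell j) s \<le> ennreal h * (ennreal (f s) * indicator (shell j) s)" for s
  proof (cases "s \<in> shell j")
    case True
    then have "s powr \<alpha> \<le> h" unfolding h_def using \<alpha>(1) shell_ge by (intro powr_mono2') auto
    then have "ennreal (s powr \<alpha> * f s) \<le> ennreal (h * f s)"
      using f_nonneg by (intro ennreal_leI mult_right_mono) auto
    then show ?thesis using True f_nonneg \<open>0 \<le> h\<close> by (simp add: ennreal_mult)
  qed simp
  then have "(\<integral>\<^sup>+s\<in>shell j. ennreal (s powr \<alpha> * f s) \<partial>lborel)
      \<le> (\<integral>\<^sup>+s. ennreal h * (ennreal (f s) * indicator (shell j) s) \<partial>lborel)"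
    by (rule nn_integral_mono)
  also have "\<dots> = ennreal h * (\<integral>\<^sup>+s\<in>shell j. ennreal (f s) \<partial>lborel)"
    by (rule nn_integral_cmult) measurable
  also have "\<dots> \<le> ennreal h * ennreal ((5 * (1/2)^j) powr (1 - 1/p) * b powr (1/p))"
    by (intro mult_left_mono nn_integral_Holder_finite_set[OF f f_nonneg shell_sets emeasure_shell_le _ p b])
      auto
  also have "\<dots> = ennreal (h * ((5 * (1/2)^j) powr (1 - 1/p) * b powr (1/p)))"
    by (simp add: h_def ennreal_mult)
  also have "h * ((5 * (1/2)^j) powr (1 - 1/p) * b powr (1/p))
      = 5 powr (1 - 1/p) * b powr (1/p) * ((1/2::real)^j) powr (\<alpha> + (1 - 1/p))"
    by (simp add: h_def powr_mult powr_add)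
  also have "((1/2::real)^j) powr (\<alpha> + (1 - 1/p)) = inverse (((1/2::real)^j) powr \<epsilon>)"
    by (metis \<alpha>(2) add_diff_eq powr_minus)
  also have "((1/2::real)^j) powr \<epsilon> = ((1/2) powr \<epsilon>)^j"
    by (rule power_powr_commute) simp
  finally show ?thesis by (simp only: divide_inverse)
qed

lemma shell_norm_sequence:
  fixes g :: "real \<Rightarrow> real"
  assumes g[measurable]: "g \<in> borel_measurable lborel" and p: "1 \<le> p"
    and \<alpha>: "\<alpha> \<le> 0" "\<alpha> + 1 - 1/p = -\<epsilon>"
    and P: "(\<integral>\<^sup>+s\<in>{0<..}. ennreal (\<bar>g s\<bar> powr p) \<partial>lborel) = ennreal P" "0 \<le> P"
  obtains Y :: "nat \<Rightarrow> real"
  where "\<And>j. 0 \<le> Y j" "\<And>n. (\<Sum>j<n. Y j powr p) \<le> 5 powr (p - 1) * P"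
    "\<And>j. (\<integral>\<^sup>+s\<in>shell j. ennreal (s powr \<alpha> * \<bar>g s\<bar>) \<partial>lborel) \<le> ennreal (Y j / ((1/2) powr \<epsilon>)^j)"
proof -
  define I where "I j = (\<integral>\<^sup>+s\<in>shell j. ennreal (\<bar>g s\<bar> powr p) \<partial>lborel)" for j
  have I_le: "I j \<le> ennreal P" for j
    unfolding I_def P(1)[symmetric] using UN_shell_subset by (intro nn_set_integral_set_mono) blast
  define b where "b j = enn2real (I j)" for j
  have "I j \<noteq> top" for j using I_le[of j] by (rule neq_top_trans[OF ennreal_neq_top])
  then have I_eq: "I j = ennreal (b j)" and "0 \<le> b j" for j
    by (simp_all add: b_def less_top)
  have "(\<Sum>j. I j) = (\<integral>\<^sup>+s\<in>(\<Union>j. shell j). ennreal (\<bar>g s\<bar> powr p) \<partial>lborel)"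
    unfolding I_def
    by (rule nn_integral_disjoint_family[symmetric]) (auto simp: disjoint_family_shell simp del: sets_lborel)
  also have "\<dots> \<le> ennreal P"
    unfolding P(1)[symmetric] by (rule nn_set_integral_set_mono[OF UN_shell_subset])
  finally have I_sum: "(\<Sum>j. I j) \<le> ennreal P" .
  have b_sum: "(\<Sum>j<n. b j) \<le> P" for n
  proof -
    have "ennreal (\<Sum>j<n. b j) = (\<Sum>j<n. I j)" by (simp add: I_eq \<open>\<And>j. 0 \<le> b j\<close>)
    also have "\<dots> \<le> (\<Sum>j. I j)" by (rule sum_le_suminf) auto
    also have "\<dots> \<le> ennreal P" by (rule I_sum)
    finally show ?thesis using P(2) by simp
  qed
  define Y where "Y j = 5 powr (1 - 1/p) * b j powr (1/p)" for j
  have "0 \<le> Y j" for j by (simp add: Y_def)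
  moreover have "(\<Sum>j<n. Y j powr p) \<le> 5 powr (p - 1) * P" for n
  proof -
    have "Y j powr p = 5 powr (p - 1) * b j" for j
      using p \<open>0 \<le> b j\<close> by (simp add: Y_def powr_mult powr_powr algebra_simps)
    then show ?thesis using b_sum[of n] by (simp add: mult_left_mono flip: sum_distrib_left)
  qed
  moreover have "(\<integral>\<^sup>+s\<in>shell j. ennreal (s powr \<alpha> * \<bar>g s\<bar>) \<partial>lborel) \<le> ennreal (Y j / ((1/2) powr \<epsilon>)^j)" for j
    unfolding Y_def using I_eq[of j] \<open>0 \<le> b j\<close>
    by (intro shell_Holder[OF _ _ p \<alpha>]) (auto simp: I_def)
  ultimately show ?thesis using that by blast
qed

section \<open>The maximal operator\<close>

lemma maxop_eq_0:
  assumes "r \<notin> near E 0"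
  shows "maxop E d p g r = 0"
proof (cases "r \<in> {2/3<..<4}")
  case True
  have no_t: "{t \<in> E. r/2 < t \<and> t < 3*r/2} = {}"
  proof (rule ccontr)
    assume "{t \<in> E. r/2 < t \<and> t < 3*r/2} \<noteq> {}"
    then obtain t where "t \<in> E" "r/2 < t" "t < 3*r/2" by blast
    moreover have "\<bar>t - r\<bar> < 4" using \<open>r/2 < t\<close> \<open>t < 3*r/2\<close> True by auto
    ultimately have "r \<in> near E 0" using True by (auto simp: near_def dist_real_def)
    then show False using assms by simp
  qed
  then show ?thesis unfolding maxop_def if_P[OF True] no_t by (simp add: bot_ennreal)
next
  case False
  then show ?thesis unfolding maxop_def by (simp only: if_False)
qed

lemma maxop_le_layer:
  assumes E: "E \<subseteq> {1..2}" and r: "r \<in> near E m" "r \<notin> near E (Suc m)"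
  shows "maxop E d p g r
           \<le> (\<integral>\<^sup>+s\<in>{(1/2)^m..6}. ennreal (s powr ((real d - 1) * (1 - 1/p) - 1) * \<bar>g s\<bar>) \<partial>lborel)"
proof -
  have r_range: "r \<in> {2/3<..<4}" using r(1) by (simp add: near_def)
  have sub: "{\<bar>r - t\<bar>..r + t} \<subseteq> {(1/2)^m..6}" if "t \<in> E" for t
  proof -
    have "\<not> \<bar>r - t\<bar> < 4 * (1/2)^Suc m"
      using r that r_range by (auto simp: near_def dist_real_def abs_minus_commute)
    then have "(1/2)^m \<le> \<bar>r - t\<bar>" by simp
    moreover have "r + t \<le> 6" using r_range that E by auto
    ultimately show ?thesis by auto
  qed
  have "(\<integral>\<^sup>+s\<in>{\<bar>r - t\<bar>..r + t}. ennreal (s powr ((real d - 1) * (1 - 1/p) - 1) * \<bar>g s\<bar>) \<partial>lborel)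
      \<le> (\<integral>\<^sup>+s\<in>{(1/2)^m..6}. ennreal (s powr ((real d - 1) * (1 - 1/p) - 1) * \<bar>g s\<bar>) \<partial>lborel)"
    if "t \<in> E" for t
    using sub[OF that] by (rule nn_set_integral_set_mono)
  then show ?thesis using r_range unfolding maxop_def by (auto intro!: SUP_least)
qed

lemma maxop_powr_le_on_layer:
  fixes g :: "real \<Rightarrow> real" and Y :: "nat \<Rightarrow> real"
  assumes E: "E \<subseteq> {1..2}" and r: "r \<in> near E m" "r \<notin> near E (Suc m)"
    and g[measurable]: "g \<in> borel_measurable lborel" and "0 < \<rho>" "\<And>j. 0 \<le> Y j" "0 < q"
    and shell_bound: "\<And>j. (\<integral>\<^sup>+s\<in>shell j. ennreal (s powr ((real d - 1) * (1 - 1/p) - 1) * \<bar>g s\<bar>) \<partial>lborel)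
                          \<le> ennreal (Y j / \<rho>^j)"
  shows "epow (maxop E d p g r) q * ennreal (r ^ (d - 1))
           \<le> ennreal (4 ^ (d - 1) * ((\<Sum>j\<le>m. \<rho>^(m - j) * Y j) / \<rho>^m) powr q)"
proof -
  let ?F = "\<lambda>s. ennreal (s powr ((real d - 1) * (1 - 1/p) - 1) * \<bar>g s\<bar>)"
  let ?Z = "(\<Sum>j\<le>m. \<rho>^(m - j) * Y j) / \<rho>^m"
  have "maxop E d p g r \<le> (\<integral>\<^sup>+s\<in>{(1/2)^m..6}. ?F s \<partial>lborel)"
    by (rule maxop_le_layer[OF E r])
  also have "\<dots> \<le> (\<integral>\<^sup>+s\<in>(\<Union>j\<le>m. shell j). ?F s \<partial>lborel)"
    by (rule nn_set_integral_set_mono[OF atLeastAtMost_subset_UN_shell])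
  also have "\<dots> \<le> (\<Sum>j\<le>m. \<integral>\<^sup>+s\<in>shell j. ?F s \<partial>lborel)"
    by (intro nn_set_integral_UN_le_sum shell_sets) auto
  also have "\<dots> \<le> (\<Sum>j\<le>m. ennreal (Y j / \<rho>^j))"
    by (intro sum_mono shell_bound)
  also have "\<dots> = ennreal (\<Sum>j\<le>m. Y j / \<rho>^j)"
    using assms by simp
  also have "(\<Sum>j\<le>m. Y j / \<rho>^j) = ?Z"
    unfolding sum_divide_distrib using \<open>0 < \<rho>\<close> by (intro sum.cong) (auto simp: power_diff)
  finally have "maxop E d p g r \<le> ennreal ?Z" .
  moreover have "0 \<le> ?Z" using assms by (simp add: sum_nonneg)
  ultimately have "epow (maxop E d p g r) q \<le> ennreal (?Z powr q)"
    using \<open>0 < q\<close> by (intro epow_le_ennreal) auto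
  moreover have "ennreal (r ^ (d - 1)) \<le> ennreal (4 ^ (d - 1))"
    using r(1) by (intro ennreal_leI power_mono) (auto simp: near_def)
  ultimately have "epow (maxop E d p g r) q * ennreal (r ^ (d - 1)) \<le> ennreal (?Z powr q) * ennreal (4 ^ (d - 1))"
    by (rule mult_mono) auto
  then show ?thesis by (simp add: ennreal_mult mult.commute)
qed

lemma maxop_exponent:
  fixes \<beta> p q :: real
  assumes "1 \<le> p" "0 < q" "\<beta> < 1" "q * ((real d - 1) * (p - 1) - 1) = (\<beta> - 1) * p"
  shows "(real d - 1) * (1 - 1/p) - 1 \<le> 0"
    and "(real d - 1) * (1 - 1/p) - 1 + 1 - 1/p = -((1 - \<beta>) / q)"
proof -
  have "(real d - 1) * (1 - 1/p) - 1 + 1 - 1/p = ((real d - 1) * (p - 1) - 1) / p"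
    using assms by (simp add: field_simps)
  also have "\<dots> = -((1 - \<beta>) / q)"
    using assms by (simp add: field_simps)
  finally show eq: "(real d - 1) * (1 - 1/p) - 1 + 1 - 1/p = -((1 - \<beta>) / q)" .
  have "1/p \<le> 1" "0 < (1 - \<beta>) / q" using assms by simp_all
  with eq show "(real d - 1) * (1 - 1/p) - 1 \<le> 0" by linarith
qed

lemma maxop_Lq_integral_le:
  fixes E :: "real set" and \<beta> C p q :: real
  assumes E: "E \<subseteq> {1..2}" and \<beta>: "0 \<le> \<beta>" "\<beta> < 1"
    and cov: "\<And>\<delta>. 0 < \<delta> \<Longrightarrow> \<delta> < 1 \<Longrightarrow> \<delta> powr \<beta> * real (covering_number E \<delta>) \<le> C"
    and pq: "1 \<le> p" "p \<le> q" and exponent: "q * ((real d - 1) * (p - 1) - 1) = (\<beta> - 1) * p"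
  obtains K where "0 < K"
    "\<And>g P. g \<in> borel_measurable lborel \<Longrightarrow>
       (\<integral>\<^sup>+s\<in>{0<..}. ennreal (\<bar>g s\<bar> powr p) \<partial>lborel) = ennreal P \<Longrightarrow> 0 \<le> P \<Longrightarrow>
       (\<integral>\<^sup>+r\<in>{0<..}. epow (maxop E d p g r) q * ennreal (r ^ (d - 1)) \<partial>lborel) \<le> ennreal (K * P powr (q / p))"
proof -
  define \<rho> A where "\<rho> = (1/2::real) powr ((1 - \<beta>) / q)" and "A = 12 * C + 14"
  define K where "K = A * 4 ^ (d - 1) * ((1 / (1 - \<rho>)) powr q * (5 powr (p - 1)) powr (q / p))"
  have "0 < q" using pq by simp
  have "0 < \<rho>" "\<rho> < 1"
    using \<beta> \<open>0 < q\<close> powr_less_mono'[of "1/2::real" 0 "(1 - \<beta>) / q"] by (simp_all add: \<rho>_def)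
  have "0 < A" using covering_bound_nonneg[OF cov] by (simp add: A_def)
  then have "0 < K" using \<open>\<rho> < 1\<close> by (simp add: K_def)
  note \<alpha> = maxop_exponent[OF pq(1) \<open>0 < q\<close> \<beta>(2) exponent]
  have near_decay: "emeasure lborel (near E m) \<le> ennreal (A * (\<rho> powr q)^m)" for m
    using emeasure_near_le[OF E \<beta>(1) cov, of m] \<open>0 < q\<close> by (simp add: A_def \<rho>_def powr_powr)
  show ?thesis
  proof (rule that[OF \<open>0 < K\<close>])
    fix g :: "real \<Rightarrow> real" and P
    assume g: "g \<in> borel_measurable lborel"
      and P: "(\<integral>\<^sup>+s\<in>{0<..}. ennreal (\<bar>g s\<bar> powr p) \<partial>lborel) = ennreal P" "0 \<le> P"
    obtain Y where Y: "\<And>j. 0 \<le> Y j" "\<And>n. (\<Sum>j<n. Y j powr p) \<le> 5 powr (p - 1) * P"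
      and shell_bound: "\<And>j. (\<integral>\<^sup>+s\<in>shell j. ennreal (s powr ((real d - 1) * (1 - 1/p) - 1) * \<bar>g s\<bar>) \<partial>lborel)
                              \<le> ennreal (Y j / \<rho>^j)"
      using shell_norm_sequence[OF g pq(1) \<alpha> P] unfolding \<rho>_def by blast
    define F where "F r = epow (maxop E d p g r) q * ennreal (r ^ (d - 1)) * indicator {0<..} r" for r
    have "F r = 0" if "r \<notin> near E 0" for r
      using maxop_eq_0[OF that] \<open>0 < q\<close> by (simp add: F_def epow_def)
    moreover have "F r \<le> ennreal (4 ^ (d - 1) * ((\<Sum>j\<le>m. \<rho>^(m - j) * Y j) / \<rho>^m) powr q)"
      if "r \<in> near E m" "r \<notin> near E (Suc m)" for r m
      using maxop_powr_le_on_layer[OF E that g \<open>0 < \<rho>\<close> Y(1) \<open>0 < q\<close> shell_bound] that(1)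
      by (auto simp: F_def near_def)
    ultimately have "(\<integral>\<^sup>+r. F r \<partial>lborel)
        \<le> (\<Sum>m. ennreal (4 ^ (d - 1) * ((\<Sum>j\<le>m. \<rho>^(m - j) * Y j) / \<rho>^m) powr q) * emeasure lborel (near E m))"
      by (intro nn_integral_le_layers[OF near_sets near_Inter_null[OF E \<beta> cov]])
    also have "\<dots> \<le> ennreal (A * 4 ^ (d - 1) * ((1 / (1 - \<rho>)) powr q * (5 powr (p - 1) * P) powr (q / p)))"
      using near_decay \<open>0 < A\<close> \<open>0 < \<rho>\<close> \<open>\<rho> < 1\<close> pq Y by (intro suminf_geometric_layers_le) auto
    also have "\<dots> = ennreal (K * P powr (q / p))"
      using P(2) by (simp add: K_def powr_mult mult_ac)
    finally show "(\<integral>\<^sup>+r\<in>{0<..}. epow (maxop E d p g r) q * ennreal (r ^ (d - 1)) \<partial>lborel)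
        \<le> ennreal (K * P powr (q / p))" by (simp add: F_def)
  qed
qed

lemma maxop_bounded:
  fixes E :: "real set" and \<beta> C p q :: real
  assumes "E \<subseteq> {1..2}" "0 \<le> \<beta>" "\<beta> < 1"
    and "\<And>\<delta>. 0 < \<delta> \<Longrightarrow> \<delta> < 1 \<Longrightarrow> \<delta> powr \<beta> * real (covering_number E \<delta>) \<le> C"
    and pq: "1 \<le> p" "p \<le> q" and "q * ((real d - 1) * (p - 1) - 1) = (\<beta> - 1) * p"
  shows "bounded_Lp_Lq_mu (maxop E d p) p q d"
proof -
  obtain K where "0 < K" and K: "\<And>g P. g \<in> borel_measurable lborel \<Longrightarrow>
       (\<integral>\<^sup>+s\<in>{0<..}. ennreal (\<bar>g s\<bar> powr p) \<partial>lborel) = ennreal P \<Longrightarrow> 0 \<le> P \<Longrightarrow>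
       (\<integral>\<^sup>+r\<in>{0<..}. epow (maxop E d p g r) q * ennreal (r ^ (d - 1)) \<partial>lborel) \<le> ennreal (K * P powr (q / p))"
    using maxop_Lq_integral_le[OF assms] by blast
  have "0 < p" "0 < q" using pq by auto
  show ?thesis unfolding bounded_Lp_Lq_mu_def
  proof (intro exI ballI)
    fix g :: "real \<Rightarrow> real" assume g: "g \<in> borel_measurable lborel"
    show "Lq_norm_mu d q (maxop E d p g) \<le> ennreal (K powr (1/q)) * Lp_norm_leb p g"
    proof (cases "(\<integral>\<^sup>+s\<in>{0<..}. ennreal (\<bar>g s\<bar> powr p) \<partial>lborel) = \<infinity>")
      case True
      then have "Lp_norm_leb p g = \<infinity>" by (simp add: Lp_norm_leb_def epow_def)
      then show ?thesis using \<open>0 < K\<close> by (simp add: ennreal_mult_top)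
    next
      case False
      then obtain P where P: "(\<integral>\<^sup>+s\<in>{0<..}. ennreal (\<bar>g s\<bar> powr p) \<partial>lborel) = ennreal P" "0 \<le> P"
        by (cases "\<integral>\<^sup>+s\<in>{0<..}. ennreal (\<bar>g s\<bar> powr p) \<partial>lborel" rule: ennreal_cases) auto
      have "Lq_norm_mu d q (maxop E d p g) \<le> ennreal ((K * P powr (q / p)) powr (1/q))"
        unfolding Lq_norm_mu_def using K[OF g P] \<open>0 < K\<close> \<open>0 < q\<close>
        by (intro epow_le_ennreal) auto
      also have "(K * P powr (q / p)) powr (1/q) = K powr (1/q) * P powr (1/p)"
        using \<open>0 < K\<close> P(2) \<open>0 < q\<close> by (simp add: powr_mult powr_powr)
      also have "ennreal (K powr (1/q) * P powr (1/p)) = ennreal (K powr (1/q)) * Lp_norm_leb p g"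
        using P by (simp add: Lp_norm_leb_def epow_def ennreal_mult)
      finally show ?thesis .
    qed
  qed
qed

theorem proposition2p7:
  fixes E :: "real set" and d :: nat and \<beta> p0 p1 :: real
  assumes "E \<subseteq> {1..2}" and "d \<ge> 2"
    and "0 \<le> \<beta>" and "\<beta> < 1"
    and "\<exists>C. \<forall>\<delta>. 0 < \<delta> \<and> \<delta> < 1 \<longrightarrow> \<delta> powr \<beta> * real (covering_number E \<delta>) \<le> C"
    and "p0 = 1 + \<beta> / (real d - 1)" and "p1 = 1 + p0 / real d"
  shows "bounded_Lp_Lq_mu (maxop E d p0) p0 p0 d \<and>
         bounded_Lp_Lq_mu (maxop E d p1) p1 (p1 * real d) d"
proof -
  obtain C where cov: "\<And>\<delta>. 0 < \<delta> \<Longrightarrow> \<delta> < 1 \<Longrightarrow> \<delta> powr \<beta> * real (covering_number E \<delta>) \<le> C"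
    using assms(5) by blast
  have p0: "(real d - 1) * (p0 - 1) = \<beta>" "1 \<le> p0" using assms(2,3,6) by simp_all
  have p1: "real d * (p1 - 1) = p0" "1 \<le> p1" using assms(2,7) p0(2) by simp_all
  have "p1 * real d * ((real d - 1) * (p1 - 1) - 1) = p1 * ((real d - 1) * (real d * (p1 - 1)) - real d)"
    by (simp add: algebra_simps)
  also have "\<dots> = p1 * ((real d - 1) * p0 - real d)" by (simp only: p1(1))
  also have "\<dots> = (\<beta> - 1) * p1" unfolding p0(1)[symmetric] by (simp add: algebra_simps)
  finally have "p1 * real d * ((real d - 1) * (p1 - 1) - 1) = (\<beta> - 1) * p1" .
  then have "bounded_Lp_Lq_mu (maxop E d p1) p1 (p1 * real d) d"
    using p1(2) assms(2) by (intro maxop_bounded[OF assms(1,3,4) cov]) auto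
  moreover have "bounded_Lp_Lq_mu (maxop E d p0) p0 p0 d"
    using p0 by (intro maxop_bounded[OF assms(1,3,4) cov]) (auto simp: algebra_simps)
  ultimately show ?thesis by blast
qed

end
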